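(* There exists a $CS(3,K_4^{(3)}+e,gn+1)$ of type $(g^n:1)$ for each $(g,n)\in\{(5,3),(5,5),(6,4),(10,2)\}$.
   Context: $K_4^{(3)}+e$ denotes the 3-uniform hypergraph with vertex set $\{1,2,3,4,5\}$ and edge set $\{\{1,2,3\},\{1,2,4\},\{1,3,4\},\{2,3,4\},\{3,4,5\}\}$. A $CS(3,K_4^{(3)}+e,gn+s)$ of type $(g^n:s)$ is a quadruple $(X,S,\mathcal{T},\mathcal{A})$ where $|X|=gn+s$, $S\subseteq X$ with $|S|=s$ (the stem), $\mathcal{T}=\{G_1,\dots,G_n\}$ is a partition of $X\setminus S$ into $n$ groups of size $g$, and $\mathcal{A}$ is a collection of hypergraphs on subsets of $X$ (blocks), each isomorphic to $K_4^{(3)}+e$, such that every 3-subset $T\subseteq X$ with $|T\cap(S\cup G_i)|<3$ for all $i$ is an edge of exactly one block, and no 3-subset of any $S\cup G_i$ is an edge of any block. Here $s=1$. *)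

theory Defs
  imports Main
begin

definition K4e_edges :: "nat set set" where
  "K4e_edges = {{1,2,3},{1,2,4},{1,3,4},{2,3,4},{3,4,5}}"

text \<open>A block on X: a 3-uniform hypergraph (given by its edge set; it has no isolated
  vertices, so its vertex set is the union of its edges) isomorphic to K_4^(3)+e,
  whose vertices lie in X.\<close>
definition is_K4e_block :: "'a set \<Rightarrow> 'a set set \<Rightarrow> bool" where
  "is_K4e_block X B \<longleftrightarrow>
     (\<exists>f. inj_on f {1..5::nat} \<and> f ` {1..5} \<subseteq> X \<and> B = (\<lambda>e. f ` e) ` K4e_edges)"

definition is_CS_K4e :: "'a set \<Rightarrow> 'a set \<Rightarrow> 'a set set \<Rightarrow> 'a set set set
                         \<Rightarrow> nat \<Rightarrow> nat \<Rightarrow> nat \<Rightarrow> bool" where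
  "is_CS_K4e X S T A g n s \<longleftrightarrow>
     finite X \<and> card X = g * n + s \<and>
     S \<subseteq> X \<and> card S = s \<and>
     card T = n \<and> (\<forall>G\<in>T. card G = g) \<and>
     (\<forall>G1\<in>T. \<forall>G2\<in>T. G1 \<noteq> G2 \<longrightarrow> G1 \<inter> G2 = {}) \<and>
     \<Union>T = X - S \<and>
     (\<forall>B\<in>A. is_K4e_block X B) \<and>
     (\<forall>Tr. Tr \<subseteq> X \<and> card Tr = 3 \<and> (\<forall>G\<in>T. card (Tr \<inter> (S \<union> G)) < 3)
            \<longrightarrow> card {B\<in>A. Tr \<in> B} = 1) \<and>
     (\<forall>G\<in>T. \<forall>B\<in>A. \<forall>e\<in>B. \<not> e \<subseteq> S \<union> G)"

end

theory Submission
  imports Defs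
begin

text \<open>
  The designs are developments of base blocks. The points are \<open>0, \<dots>, gn\<close>, where \<open>gn\<close>
  is the stem and the groups are the fibres of a class function on \<open>{0..<gn}\<close>. A cyclic
  group \<open>\<int>\<^sub>m\<close> acts on the points, fixing the stem and permuting the groups: for
  type \<open>(5\<^sup>3:1)\<close> it rotates each group of five consecutive points, otherwise it is
  translation modulo \<open>gn\<close>. If every edge of a base block meets two groups, no two base
  edges lie in the same orbit and every base edge has trivial stabiliser, then the \<open>m \<cdot> |E|\<close>
  translates of the base edges are distinct triples meeting two groups. Once \<open>m \<cdot> |E|\<close>
  equals the number \<open>C(gn+1,3) - n C(g+1,3)\<close> of such triples, every admissible triple
  is an edge of exactly one translate of a base block. The conditions on the base blocks are
  finite computations; orbits are told apart by the least code of their members.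
\<close>

fun K4e_edge_lists :: "'a list \<Rightarrow> 'a list list" where
  "K4e_edge_lists [a, b, c, d, e] = [[a, b, c], [a, b, d], [a, c, d], [b, c, d], [c, d, e]]"
| "K4e_edge_lists _ = []"

lemma K4e_edge_lists_subset: "e \<in> set (K4e_edge_lists b) \<Longrightarrow> set e \<subseteq> set b"
  by (cases b rule: K4e_edge_lists.cases) auto

lemma distinct_K4e_edge_lists:
  assumes "distinct b" "e \<in> set (K4e_edge_lists b)"
  shows "distinct e \<and> length e = 3"
  using assms by (cases b rule: K4e_edge_lists.cases) auto

lemma is_K4e_block_image:
  assumes "length b = 5" "distinct b" "inj_on f (set b)" "f ` set b \<subseteq> X"
  shows "is_K4e_block X ((\<lambda>e. f ` set e) ` set (K4e_edge_lists b))"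
proof -
  obtain a1 a2 a3 a4 a5 where b: "b = [a1, a2, a3, a4, a5]"
    using assms(1) by (auto simp: numeral_eq_Suc length_Suc_conv)
  define h where "h i = f (b ! (i - 1))" for i :: nat
  have I: "{1..5::nat} = {1, 2, 3, 4, 5}" by auto
  have "inj_on h {1..5}"
    using assms(2,3) unfolding I h_def b by (auto simp: inj_on_def)
  moreover have "h ` {1..5} \<subseteq> X"
    using assms(4) unfolding I h_def b by simp
  moreover have "(\<lambda>e. f ` set e) ` set (K4e_edge_lists b) = (\<lambda>e. h ` e) ` K4e_edges"
    unfolding K4e_edges_def h_def b by simp
  ultimately show ?thesis
    unfolding is_K4e_block_def by blast
qed

lemma card_subsets_not_within:
  fixes C :: "'i \<Rightarrow> 'a set"
  assumes "finite V" "finite I"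
    and sub: "\<And>i. i \<in> I \<Longrightarrow> C i \<subseteq> V"
    and card: "\<And>i. i \<in> I \<Longrightarrow> card (C i) = c"
    and overlap: "\<And>i j. i \<in> I \<Longrightarrow> j \<in> I \<Longrightarrow> i \<noteq> j \<Longrightarrow> card (C i \<inter> C j) < k"
  shows "card {T. T \<subseteq> V \<and> card T = k \<and> (\<forall>i\<in>I. \<not> T \<subseteq> C i)}
           = (card V choose k) - card I * (c choose k)"
proof -
  define F where "F i = {T. T \<subseteq> C i \<and> card T = k}" for i
  have finite_C: "finite (C i)" if "i \<in> I" for i
    using sub[OF that] \<open>finite V\<close> by (rule finite_subset)
  have card_F: "card (F i) = c choose k" if "i \<in> I" for i
    unfolding F_def using n_subsets[OF finite_C[OF that]] card[OF that] by simp
  have "F i \<inter> F j = {}" if "i \<in> I" "j \<in> I" "i \<noteq> j" for i j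
  proof -
    have "card T < k" if "T \<subseteq> C i \<inter> C j" for T
      using card_mono[OF _ that] finite_C \<open>i \<in> I\<close> overlap[OF \<open>i \<in> I\<close> \<open>j \<in> I\<close> \<open>i \<noteq> j\<close>]
      by (meson finite_Int le_less_trans)
    then show ?thesis unfolding F_def by auto
  qed
  moreover have "finite (F i)" if "i \<in> I" for i
    unfolding F_def using finite_C[OF that] by simp
  ultimately have card_UN: "card (\<Union>i\<in>I. F i) = card I * (c choose k)"
    using \<open>finite I\<close> by (simp add: card_UN_disjoint card_F)
  have UN_sub: "(\<Union>i\<in>I. F i) \<subseteq> {T. T \<subseteq> V \<and> card T = k}"
    unfolding F_def using sub by blast
  have "{T. T \<subseteq> V \<and> card T = k \<and> (\<forall>i\<in>I. \<not> T \<subseteq> C i)}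
          = {T. T \<subseteq> V \<and> card T = k} - (\<Union>i\<in>I. F i)"
    unfolding F_def by blast
  then show ?thesis
    using card_Diff_subset[OF finite_subset[OF UN_sub] UN_sub] \<open>finite V\<close>
    by (simp add: n_subsets card_UN)
qed

lemma card_Int_less_iff:
  assumes "finite T"
  shows "card (T \<inter> A) < card T \<longleftrightarrow> \<not> T \<subseteq> A"
proof
  show "card (T \<inter> A) < card T \<Longrightarrow> \<not> T \<subseteq> A"
    by (metis Int_absorb2 less_irrefl)
  show "\<not> T \<subseteq> A \<Longrightarrow> card (T \<inter> A) < card T"
    by (rule psubset_card_mono[OF assms]) blast
qed

definition meets_two_groups :: "nat \<Rightarrow> (nat \<Rightarrow> nat) \<Rightarrow> nat set \<Rightarrow> bool" where
  "meets_two_groups N cls T \<longleftrightarrow> (\<exists>x\<in>T. \<exists>y\<in>T. x < N \<and> y < N \<and> cls x \<noteq> cls y)"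

locale grouped_points =
  fixes g n :: nat and cls :: "nat \<Rightarrow> nat"
  assumes g_pos: "0 < g"
    and cls_less: "x < g * n \<Longrightarrow> cls x < n"
    and card_class: "i < n \<Longrightarrow> card {x. x < g * n \<and> cls x = i} = g"
begin

abbreviation stem :: nat where "stem \<equiv> g * n"

definition point_group :: "nat \<Rightarrow> nat set" where
  "point_group i = {x. x < stem \<and> cls x = i}"

definition admissible_triples :: "nat set set" where
  "admissible_triples = {T. T \<subseteq> {..stem} \<and> card T = 3 \<and> meets_two_groups stem cls T}"

lemma card_point_group: "i < n \<Longrightarrow> card (point_group i) = g"
  unfolding point_group_def by (rule card_class)

lemma point_groups_disjoint: "i \<noteq> j \<Longrightarrow> point_group i \<inter> point_group j = {}"
  unfolding point_group_def by auto

lemma UN_point_group: "(\<Union>i<n. point_group i) = {..<stem}"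
  unfolding point_group_def using cls_less by auto

lemma inj_on_point_group: "inj_on point_group {..<n}"
proof (rule inj_onI)
  fix i j assume "i \<in> {..<n}" and eq: "point_group i = point_group j"
  then obtain x where "x \<in> point_group i"
    using card_point_group g_pos by fastforce
  then show "i = j"
    using eq unfolding point_group_def by blast
qed

lemma meets_two_groups_iff:
  assumes "T \<subseteq> {..stem}" "card T = 3"
  shows "meets_two_groups stem cls T \<longleftrightarrow> (\<forall>i<n. \<not> T \<subseteq> insert stem (point_group i))"
proof
  assume "meets_two_groups stem cls T"
  then obtain x y where "x \<in> T" "y \<in> T" "x < stem" "y < stem" "cls x \<noteq> cls y"
    unfolding meets_two_groups_def by blast
  then show "\<forall>i<n. \<not> T \<subseteq> insert stem (point_group i)"
    unfolding point_group_def by auto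
next
  assume not_within: "\<forall>i<n. \<not> T \<subseteq> insert stem (point_group i)"
  have "\<not> T \<subseteq> {stem}"
    using assms(2) card_mono[of "{stem}" T] by fastforce
  then obtain x where x: "x \<in> T" "x < stem"
    using assms(1) by fastforce
  then have "\<not> T \<subseteq> insert stem (point_group (cls x))"
    using not_within cls_less by blast
  then obtain y where "y \<in> T" "y \<noteq> stem" "y \<notin> point_group (cls x)"
    by blast
  moreover have "y < stem"
    using \<open>y \<in> T\<close> \<open>y \<noteq> stem\<close> assms(1) by fastforce
  ultimately show "meets_two_groups stem cls T"
    using x unfolding meets_two_groups_def point_group_def by auto
qed

lemma card_admissible_triples:
  "card admissible_triples = (stem + 1 choose 3) - n * (g + 1 choose 3)"
proof -
  have "admissible_triples
      = {T. T \<subseteq> {..stem} \<and> card T = 3 \<and> (\<forall>i\<in>{..<n}. \<not> T \<subseteq> insert stem (point_group i))}"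
    unfolding admissible_triples_def using meets_two_groups_iff by auto
  also have "card \<dots> = (card {..stem} choose 3) - card {..<n} * (g + 1 choose 3)"
  proof (rule card_subsets_not_within)
    fix i j assume "i \<in> {..<n}" "j \<in> {..<n}" "i \<noteq> j"
    then have "insert stem (point_group i) \<inter> insert stem (point_group j) = {stem}"
      using point_groups_disjoint by blast
    then show "card (insert stem (point_group i) \<inter> insert stem (point_group j)) < 3"
      by (simp only: card.empty card_insert_disjoint finite.emptyI empty_iff) simp
  qed (auto simp: point_group_def card_class)
  finally show ?thesis by simp
qed

lemma finite_admissible_triples: "finite admissible_triples"
  by (rule finite_subset[of _ "Pow {..stem}"]) (auto simp: admissible_triples_def)

lemma admissible_triplesI:
  assumes "T \<subseteq> {..stem}" "card T = 3"
    and "\<forall>G\<in>point_group ` {..<n}. card (T \<inter> ({stem} \<union> G)) < 3"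
  shows "T \<in> admissible_triples"
proof -
  have "finite T"
    using \<open>card T = 3\<close> by (simp add: card_ge_0_finite)
  then have "\<forall>i<n. \<not> T \<subseteq> insert stem (point_group i)"
    using assms(2,3) card_Int_less_iff[of T] by auto
  then show ?thesis
    unfolding admissible_triples_def using assms(1,2) meets_two_groups_iff by blast
qed

lemma admissible_triple_not_within:
  "T \<in> admissible_triples \<Longrightarrow> i < n \<Longrightarrow> \<not> T \<subseteq> {stem} \<union> point_group i"
  using meets_two_groups_iff unfolding admissible_triples_def by auto

end

definition list_code :: "nat list \<Rightarrow> nat" where
  "list_code xs = foldl (\<lambda>a x. a * 64 + x) 0 (sort xs)"

definition orbit_code :: "(nat \<Rightarrow> nat \<Rightarrow> nat) \<Rightarrow> nat \<Rightarrow> nat list \<Rightarrow> nat" where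
  "orbit_code rot m xs = Min (set (map (\<lambda>t. list_code (map (rot t) xs)) [0..<m]))"

definition base_edges :: "nat list list \<Rightarrow> nat list list" where
  "base_edges base = concat (map K4e_edge_lists base)"

definition valid_base_blocks ::
    "nat \<Rightarrow> (nat \<Rightarrow> nat) \<Rightarrow> nat \<Rightarrow> (nat \<Rightarrow> nat \<Rightarrow> nat) \<Rightarrow> nat list list \<Rightarrow> bool" where
  "valid_base_blocks N cls m rot base \<longleftrightarrow>
     (\<forall>b\<in>set base. length b = 5 \<and> distinct b \<and> set b \<subseteq> {..N}) \<and>
     (\<forall>e\<in>set (base_edges base). meets_two_groups N cls (set e)) \<and>
     distinct (map (orbit_code rot m) (base_edges base)) \<and>
     (\<forall>e\<in>set (base_edges base). \<forall>t\<in>{1..<m}. list_code (map (rot t) e) \<noteq> list_code e)"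

lemma list_code_eq:
  "distinct xs \<Longrightarrow> distinct ys \<Longrightarrow> set xs = set ys \<Longrightarrow> list_code xs = list_code ys"
  unfolding list_code_def by (metis sorted_distinct_set_unique sorted_sort distinct_sort set_sort)

lemma diff_mod_add_mod_self:
  assumes "0 < (m::nat)"
  shows "(m - s mod m + s) mod m = 0"
proof -
  have "(m - s mod m + s) mod m = (m - s mod m + s mod m) mod m"
    by (rule mod_add_right_eq[symmetric])
  also have "\<dots> = 0"
    using assms by (simp add: less_imp_le)
  finally show ?thesis .
qed

lemma image_add_mod_lessThan:
  assumes "0 < (m::nat)"
  shows "(\<lambda>t. (t + s) mod m) ` {..<m} = {..<m}"
proof
  show "{..<m} \<subseteq> (\<lambda>t. (t + s) mod m) ` {..<m}"
  proof
    fix u assume "u \<in> {..<m}"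
    have "((u + (m - s mod m)) mod m + s) mod m = (u + (m - s mod m + s) mod m) mod m"
      by (metis add.assoc mod_add_left_eq mod_add_right_eq)
    also have "\<dots> = u"
      unfolding diff_mod_add_mod_self[OF assms] using \<open>u \<in> {..<m}\<close> by simp
    finally show "u \<in> (\<lambda>t. (t + s) mod m) ` {..<m}"
      using assms by (metis image_eqI lessThan_iff mod_less_divisor)
  qed
qed (use assms in auto)

lemma mod_diff_add_eq_0:
  assumes "s < m" "t < (m::nat)" "(m - t + s) mod m = 0"
  shows "s = t"
proof (cases "t \<le> s")
  case True
  then have "m - t + s = (s - t) + m"
    using assms(2) by simp
  then have "(s - t) mod m = 0"
    using assms(3) by (simp only: mod_add_self2)
  then show ?thesis
    using assms(1) True by simp
next
  case False
  then show ?thesis using assms by simp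
qed

locale rotation = grouped_points +
  fixes m :: nat and rot :: "nat \<Rightarrow> nat \<Rightarrow> nat"
  assumes m_pos: "0 < m"
    and rot_stem: "rot t (g * n) = g * n"
    and rot_less: "x < g * n \<Longrightarrow> rot t x < g * n"
    and rot_0: "x \<le> g * n \<Longrightarrow> rot 0 x = x"
    and rot_rot: "x \<le> g * n \<Longrightarrow> rot s (rot t x) = rot ((s + t) mod m) x"
    and rot_reflects_class:
      "x < g * n \<Longrightarrow> y < g * n \<Longrightarrow> cls (rot t x) = cls (rot t y) \<Longrightarrow> cls x = cls y"
begin

lemma rot_le: "x \<le> stem \<Longrightarrow> rot t x \<le> stem"
  using rot_less rot_stem by (cases "x = stem") (auto simp: le_less)

lemma rot_inverse: "x \<le> stem \<Longrightarrow> rot (m - t mod m) (rot t x) = x"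
proof -
  have "(m - t mod m + t) mod m = 0"
    using m_pos by (rule diff_mod_add_mod_self)
  then show "x \<le> stem \<Longrightarrow> ?thesis"
    using rot_rot rot_0 by simp
qed

lemma inj_on_rot: "inj_on (rot t) {..stem}"
  by (rule inj_on_inverseI[of _ "rot (m - t mod m)"]) (simp add: rot_inverse)

lemma meets_two_groups_rot:
  assumes "meets_two_groups stem cls T"
  shows "meets_two_groups stem cls (rot t ` T)"
proof -
  obtain x y where "x \<in> T" "y \<in> T" "x < stem" "y < stem" "cls x \<noteq> cls y"
    using assms unfolding meets_two_groups_def by blast
  then show ?thesis
    unfolding meets_two_groups_def using rot_less rot_reflects_class by blast
qed

lemma distinct_map_rot: "distinct xs \<Longrightarrow> set xs \<subseteq> {..stem} \<Longrightarrow> distinct (map (rot t) xs)"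
  by (simp add: distinct_map inj_on_subset[OF inj_on_rot])

lemma orbit_code_eq:
  assumes "distinct xs" "distinct ys" "set xs = set ys" "set xs \<subseteq> {..stem}"
  shows "orbit_code rot m xs = orbit_code rot m ys"
proof -
  have "list_code (map (rot t) xs) = list_code (map (rot t) ys)" for t
    using assms by (intro list_code_eq) (simp_all add: distinct_map_rot)
  then show ?thesis
    unfolding orbit_code_def by simp
qed

lemma orbit_code_rot:
  assumes "set xs \<subseteq> {..stem}"
  shows "orbit_code rot m (map (rot s) xs) = orbit_code rot m xs"
proof -
  have rot_map: "map (rot t) (map (rot s) xs) = map (rot ((t + s) mod m)) xs" for t
    using assms rot_rot by auto
  have "(\<lambda>t. list_code (map (rot t) (map (rot s) xs))) ` {..<m}
      = (\<lambda>t. list_code (map (rot t) xs)) ` ((\<lambda>t. (t + s) mod m) ` {..<m})"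
    by (simp only: rot_map image_image)
  then show ?thesis
    unfolding orbit_code_def image_add_mod_lessThan[OF m_pos] by (simp add: atLeast0LessThan)
qed

lemma rot_image_eq_shift:
  assumes "A \<subseteq> {..stem}" "t < m" "rot s ` A = rot t ` A"
  shows "rot ((m - t + s) mod m) ` A = A"
proof -
  have "rot (m - t) ` rot s ` A = rot ((m - t + s) mod m) ` A"
    using assms(1) rot_rot by (auto simp: image_image intro!: image_cong)
  moreover have "rot (m - t) ` rot t ` A = A"
    using assms(1,2) rot_inverse[of _ t] by (force simp: image_image)
  ultimately show ?thesis
    using assms(3) by simp
qed

definition translate :: "nat \<Rightarrow> nat list \<Rightarrow> nat set set" where
  "translate t b = (\<lambda>e. rot t ` set e) ` set (K4e_edge_lists b)"

definition development :: "nat list list \<Rightarrow> nat set set set" where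
  "development base = (\<lambda>(t, b). translate t b) ` ({..<m} \<times> set base)"

context
  fixes base :: "nat list list"
  assumes valid: "valid_base_blocks stem cls m rot base"
begin

lemma base_edge_props:
  assumes "e \<in> set (base_edges base)"
  shows "distinct e" "length e = 3" "set e \<subseteq> {..stem}"
proof -
  obtain b where b: "b \<in> set base" "e \<in> set (K4e_edge_lists b)"
    using assms unfolding base_edges_def by auto
  then show "distinct e" "length e = 3"
    using valid distinct_K4e_edge_lists unfolding valid_base_blocks_def by blast+
  show "set e \<subseteq> {..stem}"
    using b valid K4e_edge_lists_subset unfolding valid_base_blocks_def by blast
qed

lemma rot_base_edge_admissible:
  assumes "e \<in> set (base_edges base)"
  shows "rot t ` set e \<in> admissible_triples"
proof -
  note e = base_edge_props[OF assms]
  have "card (rot t ` set e) = 3"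
    using e by (simp add: card_image inj_on_subset[OF inj_on_rot] distinct_card)
  moreover have "meets_two_groups stem cls (rot t ` set e)"
    using assms valid meets_two_groups_rot unfolding valid_base_blocks_def by blast
  ultimately show ?thesis
    unfolding admissible_triples_def using e(3) rot_le by auto
qed

lemma rot_base_edge_inj:
  assumes e1: "e1 \<in> set (base_edges base)" and e2: "e2 \<in> set (base_edges base)"
    and "s < m" "t < m" and eq: "rot s ` set e1 = rot t ` set e2"
  shows "e1 = e2 \<and> s = t"
proof -
  note p1 = base_edge_props[OF e1] and p2 = base_edge_props[OF e2]
  have "orbit_code rot m e1 = orbit_code rot m (map (rot s) e1)"
    using p1 by (simp add: orbit_code_rot)
  also have "\<dots> = orbit_code rot m (map (rot t) e2)"
    using p1 p2 eq rot_le by (intro orbit_code_eq) (auto simp: distinct_map_rot)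
  also have "\<dots> = orbit_code rot m e2"
    using p2 by (simp add: orbit_code_rot)
  finally have "e1 = e2"
    using valid e1 e2 unfolding valid_base_blocks_def distinct_map by (blast dest: inj_onD)
  define d where "d = (m - t + s) mod m"
  have "set (map (rot d) e1) = set e1"
    unfolding d_def using rot_image_eq_shift[OF p1(3) \<open>t < m\<close>] eq \<open>e1 = e2\<close> by simp
  then have "list_code (map (rot d) e1) = list_code e1"
    using p1 by (intro list_code_eq) (simp_all add: distinct_map_rot)
  then have "d \<notin> {1..<m}"
    using valid e1 unfolding valid_base_blocks_def by blast
  moreover have "d < m"
    unfolding d_def using m_pos by simp
  ultimately have "d = 0"
    by simp
  then have "s = t"
    unfolding d_def by (rule mod_diff_add_eq_0[OF \<open>s < m\<close> \<open>t < m\<close>])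
  with \<open>e1 = e2\<close> show ?thesis
    by simp
qed

lemma rot_base_edges_eq_admissible_triples:
  assumes count: "m * length (base_edges base) = (stem + 1 choose 3) - n * (g + 1 choose 3)"
  shows "(\<lambda>(t, e). rot t ` set e) ` ({..<m} \<times> set (base_edges base)) = admissible_triples"
proof (rule card_subset_eq[OF finite_admissible_triples])
  show "(\<lambda>(t, e). rot t ` set e) ` ({..<m} \<times> set (base_edges base)) \<subseteq> admissible_triples"
    using rot_base_edge_admissible by auto
  have "inj_on (\<lambda>(t, e). rot t ` set e) ({..<m} \<times> set (base_edges base))"
    using rot_base_edge_inj by (auto intro!: inj_onI)
  moreover have "distinct (base_edges base)"
    using valid unfolding valid_base_blocks_def by (simp add: distinct_map)
  ultimately show "card ((\<lambda>(t, e). rot t ` set e) ` ({..<m} \<times> set (base_edges base)))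
      = card admissible_triples"
    using count by (simp add: card_image card_cartesian_product distinct_card card_admissible_triples)
qed

lemma card_blocks_containing:
  assumes count: "m * length (base_edges base) = (stem + 1 choose 3) - n * (g + 1 choose 3)"
    and T: "T \<in> admissible_triples"
  shows "card {B \<in> development base. T \<in> B} = 1"
proof -
  have "T \<in> (\<lambda>(t, e). rot t ` set e) ` ({..<m} \<times> set (base_edges base))"
    using T rot_base_edges_eq_admissible_triples[OF count] by simp
  then obtain t e where te: "t < m" "e \<in> set (base_edges base)" "T = rot t ` set e"
    by auto
  then obtain b where b: "b \<in> set base" "e \<in> set (K4e_edge_lists b)"
    unfolding base_edges_def by auto
  have "B = translate t b" if "B \<in> development base" "T \<in> B" for B
  proof -
    obtain t' b' where B: "B = translate t' b'" "t' < m" "b' \<in> set base"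
      using \<open>B \<in> development base\<close> unfolding development_def by auto
    then obtain e' where e': "e' \<in> set (K4e_edge_lists b')" "T = rot t' ` set e'"
      using \<open>T \<in> B\<close> unfolding translate_def by auto
    then have "e' \<in> set (base_edges base)"
      using B(3) unfolding base_edges_def by auto
    then have "e' = e \<and> t' = t"
      using rot_base_edge_inj te B(2) e'(2) by metis
    moreover have "distinct (concat (map K4e_edge_lists base))"
      using valid unfolding valid_base_blocks_def base_edges_def by (simp add: distinct_map)
    ultimately have "K4e_edge_lists b' = K4e_edge_lists b"
      using b B(3) e'(1) unfolding distinct_concat_iff by fastforce
    then show ?thesis
      using B(1) \<open>e' = e \<and> t' = t\<close> unfolding translate_def by simp
  qed
  moreover have "translate t b \<in> development base" "T \<in> translate t b"
    using te b unfolding development_def translate_def by auto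
  ultimately have "{B \<in> development base. T \<in> B} = {translate t b}"
    by blast
  then show ?thesis
    by simp
qed


lemma development_edge_admissible:
  "B \<in> development base \<Longrightarrow> e \<in> B \<Longrightarrow> e \<in> admissible_triples"
  using rot_base_edge_admissible unfolding development_def translate_def base_edges_def by auto

lemma is_K4e_block_development:
  assumes "B \<in> development base"
  shows "is_K4e_block {..stem} B"
proof -
  obtain t b where B: "B = translate t b" "b \<in> set base"
    using assms unfolding development_def by auto
  then have "length b = 5" "distinct b" "set b \<subseteq> {..stem}"
    using valid unfolding valid_base_blocks_def by auto
  then show ?thesis
    unfolding B translate_def
    by (intro is_K4e_block_image) (auto intro: inj_on_subset[OF inj_on_rot] rot_le)
qed

theorem is_CS_development:
  assumes count: "m * length (base_edges base) = (stem + 1 choose 3) - n * (g + 1 choose 3)"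
  shows "is_CS_K4e {..stem} {stem} (point_group ` {..<n}) (development base) g n 1"
  unfolding is_CS_K4e_def
proof (intro conjI)
  show "card (point_group ` {..<n}) = n"
    by (simp add: card_image inj_on_point_group)
  show "\<forall>G\<in>point_group ` {..<n}. card G = g"
    by (simp add: card_point_group)
  show "\<forall>G1\<in>point_group ` {..<n}. \<forall>G2\<in>point_group ` {..<n}. G1 \<noteq> G2 \<longrightarrow> G1 \<inter> G2 = {}"
    by (metis imageE point_groups_disjoint)
  show "\<Union> (point_group ` {..<n}) = {..stem} - {stem}"
    using UN_point_group by auto
  show "\<forall>B\<in>development base. is_K4e_block {..stem} B"
    using is_K4e_block_development by blast
  show "\<forall>T. T \<subseteq> {..stem} \<and> card T = 3
          \<and> (\<forall>G\<in>point_group ` {..<n}. card (T \<inter> ({stem} \<union> G)) < 3)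
        \<longrightarrow> card {B \<in> development base. T \<in> B} = 1"
    using admissible_triplesI card_blocks_containing[OF count] by blast
  show "\<forall>G\<in>point_group ` {..<n}. \<forall>B\<in>development base. \<forall>e\<in>B. \<not> e \<subseteq> {stem} \<union> G"
    using development_edge_admissible admissible_triple_not_within by blast
qed auto

end

lemma CS_of_valid_base_blocks:
  assumes "valid_base_blocks stem cls m rot base"
    and "m * length (base_edges base) = (stem + 1 choose 3) - n * (g + 1 choose 3)"
  shows "\<exists>(X::nat set) S T A. is_CS_K4e X S T A g n 1"
  using is_CS_development[OF assms] by blast

end

lemma mod_add_right_cancel: "(x + t) mod n = (y + t) mod n \<Longrightarrow> x mod n = y mod (n::nat)"
  using nat_mod_eq_iff by auto

definition rot_cyclic :: "nat \<Rightarrow> nat \<Rightarrow> nat \<Rightarrow> nat" where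
  "rot_cyclic N t x = (if x = N then N else (x + t) mod N)"

lemma card_residue_class:
  assumes "i < n"
  shows "card {x. x < g * n \<and> x mod n = i} = g"
proof -
  have "{x. x < g * n \<and> x mod n = i} = (\<lambda>k. i + n * k) ` {..<g}"
  proof (intro equalityI subsetI)
    fix x assume "x \<in> {x. x < g * n \<and> x mod n = i}"
    then have "x = i + n * (x div n)" "x div n < g"
      using mod_mult_div_eq[of x n] by (auto simp: less_mult_imp_div_less)
    then show "x \<in> (\<lambda>k. i + n * k) ` {..<g}"
      by blast
  next
    fix x assume "x \<in> (\<lambda>k. i + n * k) ` {..<g}"
    then obtain k where k: "k < g" "x = i + n * k"
      by blast
    have "i + n * k < n * Suc k"
      using assms by simp
    also have "\<dots> \<le> n * g"
      using k(1) by (intro mult_le_mono2) simp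
    finally show "x \<in> {x. x < g * n \<and> x mod n = i}"
      using assms k(2) by (simp add: mult.commute)
  qed
  moreover have "inj_on (\<lambda>k. i + n * k) {..<g}"
    using assms by (intro inj_onI) simp
  ultimately show ?thesis
    by (simp add: card_image)
qed

lemma rotation_cyclic:
  assumes "0 < g" "0 < n"
  shows "rotation g n (\<lambda>x. x mod n) (g * n) (rot_cyclic (g * n))"
proof unfold_locales
  have N: "0 < g * n"
    using assms by simp
  show "0 < g" "0 < g * n"
    using assms by simp_all
  show "x < g * n \<Longrightarrow> x mod n < n" for x
    using assms by simp
  show "i < n \<Longrightarrow> card {x. x < g * n \<and> x mod n = i} = g" for i
    by (rule card_residue_class)
  show "rot_cyclic (g * n) t (g * n) = g * n" for t
    by (simp add: rot_cyclic_def)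
  show "x < g * n \<Longrightarrow> rot_cyclic (g * n) t x < g * n" for t x
    using N by (simp add: rot_cyclic_def)
  show "x \<le> g * n \<Longrightarrow> rot_cyclic (g * n) 0 x = x" for x
    by (auto simp: rot_cyclic_def)
  show "rot_cyclic (g * n) s (rot_cyclic (g * n) t x)
      = rot_cyclic (g * n) ((s + t) mod (g * n)) x" if "x \<le> g * n" for s t x
  proof -
    have "a mod (g * n) \<noteq> g * n" for a
      using N by (metis less_irrefl mod_less_divisor)
    then show ?thesis
      using that by (auto simp: rot_cyclic_def mod_simps ac_simps)
  qed
  show "x mod n = y mod n"
    if "x < g * n" "y < g * n"
      "rot_cyclic (g * n) t x mod n = rot_cyclic (g * n) t y mod n" for t x y
    using that by (auto simp: rot_cyclic_def mod_mod_cancel intro: mod_add_right_cancel)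
qed

definition rot_in_groups :: "nat \<Rightarrow> nat \<Rightarrow> nat \<Rightarrow> nat \<Rightarrow> nat" where
  "rot_in_groups g N t x = (if x = N then N else x div g * g + (x mod g + t) mod g)"

lemma mult_add_less_mult:
  assumes "q < n" "r < g"
  shows "q * g + r < g * (n::nat)"
proof -
  have "q * g + r < Suc q * g"
    using assms(2) by simp
  also have "\<dots> \<le> n * g"
    using assms(1) by (intro mult_le_mono1) simp
  finally show ?thesis
    by (simp add: mult.commute)
qed

lemma card_div_class:
  assumes "0 < g" "i < n"
  shows "card {x. x < g * n \<and> x div g = i} = g"
proof -
  have "{x. x < g * n \<and> x div g = i} = {g * i..<g * Suc i}"
  proof (intro equalityI subsetI)
    fix x assume "x \<in> {x. x < g * n \<and> x div g = i}"
    then have "x = g * i + x mod g"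
      using mult_div_mod_eq[of g x] by simp
    moreover have "x mod g < g"
      using assms(1) by simp
    ultimately show "x \<in> {g * i..<g * Suc i}"
      by simp
  next
    fix x assume x: "x \<in> {g * i..<g * Suc i}"
    have "g * Suc i \<le> g * n"
      using assms(2) by (intro mult_le_mono2) simp
    then show "x \<in> {x. x < g * n \<and> x div g = i}"
      using x by (auto intro: div_nat_eqI)
  qed
  then show ?thesis
    by simp
qed

lemma rotation_in_groups:
  assumes "0 < g" "0 < n"
  shows "rotation g n (\<lambda>x. x div g) g (rot_in_groups g (g * n))"
proof unfold_locales
  have rot_div: "rot_in_groups g (g * n) t x div g = x div g" if "x < g * n" for t x
    using that assms(1) by (simp add: rot_in_groups_def)
  have rot_less: "rot_in_groups g (g * n) t x < g * n" if "x < g * n" for t x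
  proof -
    have "x div g < n"
      using that by (simp add: less_mult_imp_div_less mult.commute)
    moreover have "(x mod g + t) mod g < g"
      using assms(1) by simp
    ultimately show ?thesis
      using that by (simp add: rot_in_groups_def mult_add_less_mult)
  qed
  show "0 < g"
    using assms by simp_all
  show "x < g * n \<Longrightarrow> x div g < n" for x
    using assms by (simp add: div_less_iff_less_mult mult.commute)
  show "i < n \<Longrightarrow> card {x. x < g * n \<and> x div g = i} = g" for i
    using assms(1) by (rule card_div_class)
  show "rot_in_groups g (g * n) t (g * n) = g * n" for t
    by (simp add: rot_in_groups_def)
  show "x < g * n \<Longrightarrow> rot_in_groups g (g * n) t x < g * n" for t x
    by (rule rot_less)
  show "x \<le> g * n \<Longrightarrow> rot_in_groups g (g * n) 0 x = x" for x
    by (simp add: rot_in_groups_def)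
  show "rot_in_groups g (g * n) s (rot_in_groups g (g * n) t x)
      = rot_in_groups g (g * n) ((s + t) mod g) x" if "x \<le> g * n" for s t x
  proof (cases "x = g * n")
    case False
    define y where "y = rot_in_groups g (g * n) t x"
    have "x < g * n"
      using that False by simp
    then have "y \<noteq> g * n" "y mod g = (x mod g + t) mod g"
      unfolding y_def using rot_less[of x t] assms(1) by (simp_all add: rot_in_groups_def)
    moreover have "y div g = x div g"
      unfolding y_def using \<open>x < g * n\<close> by (rule rot_div)
    ultimately have "rot_in_groups g (g * n) s y = x div g * g + ((x mod g + t) mod g + s) mod g"
      by (simp add: rot_in_groups_def)
    also have "((x mod g + t) mod g + s) mod g = (x mod g + (s + t)) mod g"
      by (metis add.assoc add.commute mod_add_left_eq)
    also have "\<dots> = (x mod g + (s + t) mod g) mod g"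
      by (simp add: mod_add_right_eq)
    also have "x div g * g + \<dots> = rot_in_groups g (g * n) ((s + t) mod g) x"
      using False by (simp add: rot_in_groups_def)
    finally show ?thesis
      unfolding y_def .
  qed (simp add: rot_in_groups_def)
  show "x div g = y div g"
    if "x < g * n" "y < g * n"
      "rot_in_groups g (g * n) t x div g = rot_in_groups g (g * n) t y div g" for t x y
    using that rot_div by simp
qed

lemma choose_three: "n choose 3 = n * ((n - 1) * (n - 2) div 2) div 3"
proof -
  have "3 * (n choose 3) = n * (n - 1 choose 2)"
    using times_binomial_minus1_eq[of 3 n] by simp
  also have "n - 1 choose 2 = (n - 1) * (n - 2) div 2"
    by (metis choose_two diff_diff_left one_add_one)
  finally show ?thesis
    by simp
qed

definition base_5_3 :: "nat list list" where
  "base_5_3 =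
    [[0, 9, 5, 10, 15], [0, 15, 9, 13, 11], [0, 7, 1, 6, 15], [0, 15, 6, 12, 1], [9, 15, 2, 11, 0],
     [8, 11, 0, 15, 10], [5, 12, 6, 10, 0], [8, 11, 6, 14, 5], [7, 10, 0, 8, 14], [6, 11, 0, 9, 8],
     [0, 12, 7, 13, 9], [0, 6, 13, 14, 7], [0, 1, 8, 12, 11], [0, 1, 10, 11, 6], [0, 2, 7, 9, 11],
     [2, 8, 0, 5, 14], [0, 12, 2, 14, 7], [0, 10, 2, 13, 14], [1, 9, 0, 14, 11], [1, 14, 2, 6, 0]]"

lemma CS_5_3: "\<exists>(X::nat set) S T A. is_CS_K4e X S T A 5 3 1"
proof (rule rotation.CS_of_valid_base_blocks[OF rotation_in_groups])
  show "valid_base_blocks (5 * 3) (\<lambda>x. x div 5) 5 (rot_in_groups 5 (5 * 3)) base_5_3"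
    by (simp add: valid_base_blocks_def base_5_3_def base_edges_def meets_two_groups_def
        orbit_code_def list_code_def rot_in_groups_def upt_rec atLeastLessThan_upt)
  show "5 * length (base_edges base_5_3) = (5 * 3 + 1 choose 3) - 3 * (5 + 1 choose 3)"
    by (simp add: base_5_3_def base_edges_def choose_three)
qed simp_all

definition base_5_5 :: "nat list list" where
  "base_5_5 =
    [[0, 25, 8, 21, 2], [3, 21, 0, 11, 25], [1, 25, 0, 7, 3], [9, 18, 0, 3, 25], [0, 3, 8, 17, 25],
     [5, 21, 0, 2, 25], [3, 23, 1, 4, 0], [17, 22, 0, 1, 14], [10, 23, 1, 8, 0], [0, 11, 13, 22, 2],
     [0, 1, 5, 18, 15], [0, 3, 1, 13, 6], [18, 23, 0, 6, 1], [0, 15, 1, 19, 8], [9, 11, 0, 1, 21],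
     [7, 19, 0, 2, 1], [11, 22, 1, 10, 0], [2, 6, 0, 10, 18], [0, 6, 11, 17, 2], [16, 18, 0, 4, 2]]"

lemma CS_5_5: "\<exists>(X::nat set) S T A. is_CS_K4e X S T A 5 5 1"
proof (rule rotation.CS_of_valid_base_blocks[OF rotation_cyclic])
  show "valid_base_blocks (5 * 5) (\<lambda>x. x mod 5) (5 * 5) (rot_cyclic (5 * 5)) base_5_5"
    by (simp add: valid_base_blocks_def base_5_5_def base_edges_def meets_two_groups_def
        orbit_code_def list_code_def rot_cyclic_def upt_rec atLeastLessThan_upt)
  show "5 * 5 * length (base_edges base_5_5) = (5 * 5 + 1 choose 3) - 5 * (5 + 1 choose 3)"
    by (simp add: base_5_5_def base_edges_def choose_three)
qed simp_all

definition base_6_4 :: "nat list list" where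
  "base_6_4 =
    [[0, 2, 17, 24, 7], [11, 17, 0, 3, 24], [0, 9, 3, 14, 24], [0, 24, 1, 19, 7], [7, 18, 1, 15, 0],
     [1, 10, 0, 20, 18], [4, 18, 0, 17, 1], [0, 1, 14, 18, 3], [0, 7, 14, 19, 1], [3, 13, 0, 1, 9],
     [1, 22, 0, 2, 14], [5, 8, 0, 1, 12], [9, 11, 0, 16, 1], [5, 9, 0, 2, 13], [0, 3, 6, 15, 10],
     [0, 19, 2, 11, 15], [1, 4, 0, 6, 9], [0, 8, 2, 10, 5]]"

lemma CS_6_4: "\<exists>(X::nat set) S T A. is_CS_K4e X S T A 6 4 1"
proof (rule rotation.CS_of_valid_base_blocks[OF rotation_cyclic])
  show "valid_base_blocks (6 * 4) (\<lambda>x. x mod 4) (6 * 4) (rot_cyclic (6 * 4)) base_6_4"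
    by (simp add: valid_base_blocks_def base_6_4_def base_edges_def meets_two_groups_def
        orbit_code_def list_code_def rot_cyclic_def upt_rec atLeastLessThan_upt)
  show "6 * 4 * length (base_edges base_6_4) = (6 * 4 + 1 choose 3) - 4 * (6 + 1 choose 3)"
    by (simp add: base_6_4_def base_edges_def choose_three)
qed simp_all

definition base_10_2 :: "nat list list" where
  "base_10_2 =
    [[0, 3, 7, 10, 20], [0, 15, 2, 9, 20], [0, 1, 8, 17, 20], [0, 15, 3, 8, 20], [9, 10, 0, 1, 20],
     [0, 5, 1, 16, 11], [0, 1, 4, 13, 15], [0, 18, 1, 15, 10], [1, 3, 0, 14, 11], [0, 1, 2, 7, 4]]"

lemma CS_10_2: "\<exists>(X::nat set) S T A. is_CS_K4e X S T A 10 2 1"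
proof (rule rotation.CS_of_valid_base_blocks[OF rotation_cyclic])
  show "valid_base_blocks (10 * 2) (\<lambda>x. x mod 2) (10 * 2) (rot_cyclic (10 * 2)) base_10_2"
    by (simp add: valid_base_blocks_def base_10_2_def base_edges_def meets_two_groups_def
        orbit_code_def list_code_def rot_cyclic_def upt_rec atLeastLessThan_upt)
  show "10 * 2 * length (base_edges base_10_2) = (10 * 2 + 1 choose 3) - 2 * (10 + 1 choose 3)"
    by (simp add: base_10_2_def base_edges_def choose_three)
qed simp_all

theorem lemma3p5:
  assumes "(g, n) \<in> {(5,3), (5,5), (6,4), (10,2)}"
  shows "\<exists>(X::nat set) S T A. is_CS_K4e X S T A g n 1"
  using assms CS_5_3 CS_5_5 CS_6_4 CS_10_2 by auto

end
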